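(* Consider the FlexGT/Acc-FlexGT recursion in the context, and suppose (C) (with some $\mu\ge0$), (S), (V), (G) hold and $x^*$ is a minimizer of $f$. If $\gamma\le\frac{1}{4\beta L}$, then for all $k\ge0$, $$\mathbb{E}\|\bar x_{\beta(k+1)}-x^*\|^2\le\Big(1-\frac{\mu\beta\gamma}{2}\Big)\mathbb{E}\|\bar x_{\beta k}-x^*\|^2+\frac{\gamma^2\beta\sigma^2}{n}+\frac{3\gamma\beta L}{n}\mathbb{E}\|\tilde{\mathbf x}_{\beta k}\|^2-\gamma\beta\,\mathbb{E}\big[f(\bar x_{\beta k})-f(x^* )\big].$$
   Context: Problem: $n$ nodes, each with $f_i(x)=\mathbb{E}_{\xi_i\sim\mathcal D_i}[f_i(x;\xi_i)]$ on $\mathbb{R}^p$, $f=\frac1n\sum_i f_i$. Stochastic oracle: unbiased $\nabla f_i(x;\xi_i)$, independent samples across nodes and iterations. Assumptions: (C) for each $i$, $f_i(x')-f_i(x)\ge\langle\nabla f_i(x),x'-x\rangle+\frac{\mu}{2}\|x'-x\|^2$, $\mu\ge0$. (S) each $f_i$ has $L$-Lipschitz gradient. (V) $\mathbb{E}\|\nabla f_i(x;\xi_i)-\nabla f_i(x)\|^2\le\sigma^2$. (G) $W$ doubly stochastic, $\rho_W:=\|W-\mathbf J\|_2^2<1$, $\mathbf J=\mathbf 1\mathbf 1^\top/n$. Algorithm: integers $\alpha,\beta\ge1$, stepsize $\gamma>0$; $\bar W=W^\alpha$ (FlexGT) or $\bar W=M_\alpha$ (Acc-FlexGT) with $M_{-1}=M_0=I$,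 $M_{s+1}=(1+\eta)WM_s-\eta M_{s-1}$, $\eta=\frac{1-\sqrt{1-\rho_W}}{1+\sqrt{1-\rho_W}}$ (in either case $\bar W$ is doubly stochastic). Iterates $\mathbf x_t,\mathbf y_t\in\mathbb{R}^{n\times p}$; snapshot $\mathbf z_t=\mathbf x_{\beta\lfloor t/\beta\rfloor}$; $\nabla G_t$ has rows $\nabla f_i(z_{i,t};\xi_{i,t})$ with fresh samples. $\mathbf y_0=\nabla G_0$. For round $k\ge0$, $j=0,\dots,\beta-2$: $\mathbf x_{\beta k+j+1}=\mathbf x_{\beta k+j}-\gamma\mathbf y_{\beta k+j}$, $\mathbf y_{\beta k+j+1}=\mathbf y_{\beta k+j}+\nabla G_{\beta k+j+1}-\nabla G_{\beta k+j}$; round end: $\mathbf x_{\beta(k+1)}=\bar W(\mathbf x_{\beta k}-\gamma\sum_{j=0}^{\beta-1}\mathbf y_{\beta k+j})$, $\mathbf y_{\beta(k+1)}=\bar W(\mathbf y_{\beta k}+\nabla G_{\beta(k+1)}-\nabla G_{\beta k})$. Notation: $\|\cdot\|$ Euclidean/Frobenius; $\bar x_t=\mathbf 1^\top\mathbf x_t/n$, $\tilde{\mathbf x}_t=\mathbf x_t-\mathbf 1\bar x_t$. *)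

theory Defs
  imports "HOL-Probability.Probability"
begin

text \<open>Nodes are indexed by a finite type 'n (so n = CARD('n)); points live in a
Euclidean space 'a (standing for R^p). Stacked iterates are functions 'n => 'a
(row i = local variable of node i).\<close>

definition avg_mat :: "real^'n^'n" where
  "avg_mat = (\<chi> i j. 1 / real CARD('n::finite))"

definition doubly_stochastic :: "real^'n::finite^'n \<Rightarrow> bool" where
  "doubly_stochastic W \<longleftrightarrow> (\<forall>i j. W$i$j \<ge> 0) \<and> (\<forall>i. (\<Sum>j\<in>UNIV. W$i$j) = 1)
     \<and> (\<forall>j. (\<Sum>i\<in>UNIV. W$i$j) = 1)"

text \<open>rho_W = ||W - J||_2^2 (spectral norm = operator norm w.r.t. Euclidean norm).\<close>
definition rhoW :: "real^'n::finite^'n \<Rightarrow> real" where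
  "rhoW W = (onorm (\<lambda>v. (W - avg_mat) *v v))\<^sup>2"

fun mat_pow :: "real^'n::finite^'n \<Rightarrow> nat \<Rightarrow> real^'n^'n" where
  "mat_pow W 0 = mat 1"
| "mat_pow W (Suc m) = W ** mat_pow W m"

definition cheb_eta :: "real^'n::finite^'n \<Rightarrow> real" where
  "cheb_eta W = (1 - sqrt (1 - rhoW W)) / (1 + sqrt (1 - rhoW W))"

text \<open>Chebyshev acceleration: M_{-1} = M_0 = I, M_{s+1} = (1+eta) W M_s - eta M_{s-1}.\<close>
fun acc_M :: "real^'n::finite^'n \<Rightarrow> nat \<Rightarrow> real^'n^'n" where
  "acc_M W 0 = mat 1"
| "acc_M W (Suc 0) = (1 + cheb_eta W) *\<^sub>R (W ** mat 1) - cheb_eta W *\<^sub>R mat 1"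
| "acc_M W (Suc (Suc s)) = (1 + cheb_eta W) *\<^sub>R (W ** acc_M W (Suc s)) - cheb_eta W *\<^sub>R acc_M W s"

definition Wbar :: "bool \<Rightarrow> real^'n::finite^'n \<Rightarrow> nat \<Rightarrow> real^'n^'n" where
  "Wbar acc W \<alpha> = (if acc then acc_M W \<alpha> else mat_pow W \<alpha>)"

definition mix :: "real^'n::finite^'n \<Rightarrow> ('n \<Rightarrow> 'a::real_vector) \<Rightarrow> ('n \<Rightarrow> 'a)" where
  "mix A X = (\<lambda>i. \<Sum>j\<in>UNIV. A$i$j *\<^sub>R X j)"

text \<open>Stacked stochastic gradient nabla G_t: row i is g i (z_{i,t}) (xi_{i,t}), with
xi_{i,t} = omega (i,t).\<close>
definition gradG :: "('n \<Rightarrow> 'a \<Rightarrow> 's \<Rightarrow> 'a) \<Rightarrow> ('n \<Rightarrow> 'a) \<Rightarrow> ('n \<times> nat \<Rightarrow> 's) \<Rightarrow> nat \<Rightarrow> ('n \<Rightarrow> 'a)" where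
  "gradG g z \<omega> t = (\<lambda>i. g i (z i) (\<omega> (i, t)))"

text \<open>State at time t: (x_t, y_t, z_t, S_t) where z_t = x_{beta*floor(t/beta)} is the snapshot
and S_t = sum of y_s for s from beta*floor(t/beta) to t (running sum of the current round).\<close>
fun flexgt :: "real^'n::finite^'n \<Rightarrow> real \<Rightarrow> nat \<Rightarrow> ('n \<Rightarrow> 'a::real_vector \<Rightarrow> 's \<Rightarrow> 'a)
    \<Rightarrow> ('n \<Rightarrow> 'a) \<Rightarrow> ('n \<times> nat \<Rightarrow> 's) \<Rightarrow> nat
    \<Rightarrow> ('n \<Rightarrow> 'a) \<times> ('n \<Rightarrow> 'a) \<times> ('n \<Rightarrow> 'a) \<times> ('n \<Rightarrow> 'a)" where
  "flexgt Wb \<gamma> \<beta> g x0 \<omega> 0 = (x0, gradG g x0 \<omega> 0, x0, gradG g x0 \<omega> 0)"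
| "flexgt Wb \<gamma> \<beta> g x0 \<omega> (Suc t) =
    (let (x, y, z, S) = flexgt Wb \<gamma> \<beta> g x0 \<omega> t;
         Gt = gradG g z \<omega> t in
     if \<beta> dvd Suc t then
       (let x' = mix Wb (\<lambda>i. z i - \<gamma> *\<^sub>R S i);
            G' = gradG g x' \<omega> (Suc t);
            y' = mix Wb (\<lambda>i. y i + G' i - Gt i)
        in (x', y', x', y'))
     else
       (let x' = (\<lambda>i. x i - \<gamma> *\<^sub>R y i);
            G' = gradG g z \<omega> (Suc t);
            y' = (\<lambda>i. y i + G' i - Gt i)
        in (x', y', z, (\<lambda>i. S i + y' i))))"

definition xit :: "real^'n::finite^'n \<Rightarrow> real \<Rightarrow> nat \<Rightarrow> ('n \<Rightarrow> 'a::real_vector \<Rightarrow> 's \<Rightarrow> 'a)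
    \<Rightarrow> ('n \<Rightarrow> 'a) \<Rightarrow> ('n \<times> nat \<Rightarrow> 's) \<Rightarrow> nat \<Rightarrow> ('n \<Rightarrow> 'a)" where
  "xit Wb \<gamma> \<beta> g x0 \<omega> t = fst (flexgt Wb \<gamma> \<beta> g x0 \<omega> t)"

definition node_avg :: "('n::finite \<Rightarrow> 'a::real_vector) \<Rightarrow> 'a" where
  "node_avg X = (1 / real CARD('n)) *\<^sub>R (\<Sum>i\<in>UNIV. X i)"

definition consensus_err :: "('n::finite \<Rightarrow> 'a::real_normed_vector) \<Rightarrow> real" where
  "consensus_err X = (\<Sum>i\<in>UNIV. (norm (X i - node_avg X))\<^sup>2)"

end

theory Submission
  imports Defs
begin

text \<open>The mixing matrix Wbar has unit column sums, so mixing preserves network averages and,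
  by gradient tracking, the average of y is always the average of the sampled gradients at the
  current snapshot. Over one round the network average therefore moves by
  xbar(beta(k+1)) = xbar(beta k) - gamma sum_(l<beta) (1/n) sum_i g_i(x_i(beta k); xi_(i,beta k+l)).
  Write this as the deterministic step xbar - x* - gamma beta hbar, where hbar averages the exact
  gradients at the local iterates, plus n beta noise terms. Since x(beta k) depends only on earlier
  samples and each noise term has mean zero whatever the other samples are, resampling the round's
  samples one at a time shows that the expected squared distance is at most that of the
  deterministic step plus n beta (gamma/n)^2 sigma^2. The deterministic step is controlled by the
  descent lemma, strong convexity and the bound |grad f|^2 <= 2L (f - f*), and gamma beta L <= 1/4
  absorbs the quadratic terms.\<close>

section \<open>Column sums and network averages\<close>

text \<open>The Chebyshev matrices acc_M W s may have negative entries, so Wbar need not be doubly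
  stochastic; unit column sums are all that survives, and all that is needed.\<close>

definition col_sums_one :: "real^'n::finite^'n \<Rightarrow> bool" where
  "col_sums_one A \<longleftrightarrow> (\<forall>j. (\<Sum>i\<in>UNIV. A$i$j) = 1)"

lemma col_sums_one_mat_1: "col_sums_one (mat 1 :: real^'n::finite^'n)"
  unfolding col_sums_one_def by (simp add: mat_def if_distrib sum.delta)

lemma col_sums_one_mult:
  assumes "col_sums_one A" "col_sums_one B"
  shows "col_sums_one (A ** B)"
proof -
  have "(\<Sum>i\<in>UNIV. (A ** B)$i$j) = (\<Sum>l\<in>UNIV. (\<Sum>i\<in>UNIV. A$i$l) * B$l$j)" for j
    by (simp add: matrix_matrix_mult_def sum_distrib_right) (rule sum.swap)
  with assms show ?thesis by (simp add: col_sums_one_def)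
qed

lemma col_sums_one_affine_comb:
  "col_sums_one A \<Longrightarrow> col_sums_one B \<Longrightarrow> col_sums_one ((1 + e) *\<^sub>R A - e *\<^sub>R B)"
  by (simp add: col_sums_one_def sum_subtractf flip: sum_distrib_left)

lemma col_sums_one_mat_pow: "col_sums_one W \<Longrightarrow> col_sums_one (mat_pow W m)"
  by (induction m) (auto intro: col_sums_one_mult col_sums_one_mat_1)

lemma col_sums_one_acc_M: "col_sums_one W \<Longrightarrow> col_sums_one (acc_M W m)"
  by (induction W m rule: acc_M.induct)
    (auto intro!: col_sums_one_mult col_sums_one_mat_1 col_sums_one_affine_comb)

lemma col_sums_one_Wbar: "doubly_stochastic W \<Longrightarrow> col_sums_one (Wbar acc W \<alpha>)"
  by (simp add: Wbar_def doubly_stochastic_def col_sums_one_acc_M col_sums_one_mat_pow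
      flip: col_sums_one_def)

lemma node_avg_mix:
  fixes X :: "'n::finite \<Rightarrow> 'a::real_vector"
  assumes "col_sums_one A"
  shows "node_avg (mix A X) = node_avg X"
proof -
  have "(\<Sum>i\<in>UNIV. \<Sum>j\<in>UNIV. A$i$j *\<^sub>R X j) = (\<Sum>j\<in>UNIV. (\<Sum>i\<in>UNIV. A$i$j) *\<^sub>R X j)"
    by (subst sum.swap) (simp add: scaleR_sum_left)
  with assms show ?thesis by (simp add: node_avg_def mix_def col_sums_one_def)
qed

lemma node_avg_add: "node_avg (\<lambda>i. X i + Y i) = node_avg X + node_avg Y"
  by (simp add: node_avg_def sum.distrib scaleR_add_right)

lemma node_avg_diff: "node_avg (\<lambda>i. X i - Y i) = node_avg X - node_avg Y"
  by (simp add: node_avg_def sum_subtractf scaleR_diff_right)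

lemma node_avg_scaleR: "node_avg (\<lambda>i. c *\<^sub>R X i) = c *\<^sub>R node_avg X"
  by (simp add: node_avg_def scaleR_sum_right[symmetric])

section \<open>The iterates of FlexGT\<close>

context
  fixes Wb :: "real^'n::finite^'n" and \<gamma> :: real and \<beta> :: nat
    and g :: "'n \<Rightarrow> 'a::real_vector \<Rightarrow> 's \<Rightarrow> 'a" and x0 :: "'n \<Rightarrow> 'a"
begin

definition y_iter :: "('n \<times> nat \<Rightarrow> 's) \<Rightarrow> nat \<Rightarrow> 'n \<Rightarrow> 'a" where
  "y_iter \<omega> t = fst (snd (flexgt Wb \<gamma> \<beta> g x0 \<omega> t))"

definition snapshot :: "('n \<times> nat \<Rightarrow> 's) \<Rightarrow> nat \<Rightarrow> 'n \<Rightarrow> 'a" where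
  "snapshot \<omega> t = fst (snd (snd (flexgt Wb \<gamma> \<beta> g x0 \<omega> t)))"

definition round_sum :: "('n \<times> nat \<Rightarrow> 's) \<Rightarrow> nat \<Rightarrow> 'n \<Rightarrow> 'a" where
  "round_sum \<omega> t = snd (snd (snd (flexgt Wb \<gamma> \<beta> g x0 \<omega> t)))"

lemma flexgt_eq_iterates:
  "flexgt Wb \<gamma> \<beta> g x0 \<omega> t = (xit Wb \<gamma> \<beta> g x0 \<omega> t, y_iter \<omega> t, snapshot \<omega> t, round_sum \<omega> t)"
  by (simp add: xit_def y_iter_def snapshot_def round_sum_def)

lemma iterates_0:
  "xit Wb \<gamma> \<beta> g x0 \<omega> 0 = x0" "y_iter \<omega> 0 = gradG g x0 \<omega> 0"
  "snapshot \<omega> 0 = x0" "round_sum \<omega> 0 = gradG g x0 \<omega> 0"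
  by (simp_all add: xit_def y_iter_def snapshot_def round_sum_def)

lemma iterates_Suc:
  "xit Wb \<gamma> \<beta> g x0 \<omega> (Suc t) = (if \<beta> dvd Suc t
      then mix Wb (\<lambda>i. snapshot \<omega> t i - \<gamma> *\<^sub>R round_sum \<omega> t i)
      else (\<lambda>i. xit Wb \<gamma> \<beta> g x0 \<omega> t i - \<gamma> *\<^sub>R y_iter \<omega> t i))"
  "y_iter \<omega> (Suc t) = (if \<beta> dvd Suc t
      then mix Wb (\<lambda>i. y_iter \<omega> t i + gradG g (xit Wb \<gamma> \<beta> g x0 \<omega> (Suc t)) \<omega> (Suc t) i
                          - gradG g (snapshot \<omega> t) \<omega> t i)
      else (\<lambda>i. y_iter \<omega> t i + gradG g (snapshot \<omega> t) \<omega> (Suc t) i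
                          - gradG g (snapshot \<omega> t) \<omega> t i))"
  "snapshot \<omega> (Suc t) = (if \<beta> dvd Suc t then xit Wb \<gamma> \<beta> g x0 \<omega> (Suc t) else snapshot \<omega> t)"
  "round_sum \<omega> (Suc t) = (if \<beta> dvd Suc t then y_iter \<omega> (Suc t)
      else (\<lambda>i. round_sum \<omega> t i + y_iter \<omega> (Suc t) i))"
  using flexgt.simps(2)[of Wb \<gamma> \<beta> g x0 \<omega> t]
  unfolding flexgt_eq_iterates[of \<omega> t] flexgt_eq_iterates[of \<omega> "Suc t"]
  by (simp_all add: Let_def split: if_splits)

lemma node_avg_y_iter:
  assumes "col_sums_one Wb"
  shows "node_avg (y_iter \<omega> t) = node_avg (gradG g (snapshot \<omega> t) \<omega> t)"
  by (induction t)
    (simp_all add: iterates_0 iterates_Suc node_avg_mix[OF assms] node_avg_add node_avg_diff)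

lemma iterates_round_start:
  assumes "\<beta> dvd t"
  shows "snapshot \<omega> t = xit Wb \<gamma> \<beta> g x0 \<omega> t" "round_sum \<omega> t = y_iter \<omega> t"
  using assms by (cases t; simp add: iterates_0 iterates_Suc)+

lemma iterates_within_round:
  assumes "j < \<beta>"
  shows "snapshot \<omega> (\<beta> * k + j) = xit Wb \<gamma> \<beta> g x0 \<omega> (\<beta> * k)
    \<and> node_avg (round_sum \<omega> (\<beta> * k + j)) = (\<Sum>l\<le>j. node_avg (y_iter \<omega> (\<beta> * k + l)))"
  using assms
proof (induction j)
  case 0
  then show ?case by (simp add: iterates_round_start)
next
  case (Suc j)
  have "\<not> \<beta> dvd Suc (\<beta> * k + j)"
    using Suc.prems by (auto simp: dvd_add_right_iff simp flip: add_Suc_right dest: dvd_imp_le)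
  with Suc show ?case by (simp add: iterates_Suc node_avg_add)
qed

lemma node_avg_xit_next_round:
  assumes "col_sums_one Wb" "\<beta> \<ge> 1"
  shows "node_avg (xit Wb \<gamma> \<beta> g x0 \<omega> (\<beta> * (k + 1))) = node_avg (xit Wb \<gamma> \<beta> g x0 \<omega> (\<beta> * k))
     - \<gamma> *\<^sub>R (\<Sum>l<\<beta>. node_avg (gradG g (xit Wb \<gamma> \<beta> g x0 \<omega> (\<beta> * k)) \<omega> (\<beta> * k + l)))"
proof -
  define t where "t = \<beta> * k + (\<beta> - 1)"
  have t: "\<beta> * (k + 1) = Suc t" "\<beta> dvd Suc t"
    using assms(2) unfolding t_def by (simp_all flip: t_def)
  have "node_avg (round_sum \<omega> t) = (\<Sum>l<\<beta>. node_avg (gradG g (xit Wb \<gamma> \<beta> g x0 \<omega> (\<beta> * k)) \<omega> (\<beta> * k + l)))"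
  proof -
    have "node_avg (y_iter \<omega> (\<beta> * k + l)) = node_avg (gradG g (xit Wb \<gamma> \<beta> g x0 \<omega> (\<beta> * k)) \<omega> (\<beta> * k + l))"
      if "l < \<beta>" for l
      using iterates_within_round[OF that] node_avg_y_iter[OF assms(1)] by simp
    moreover have "{..\<beta> - 1} = {..<\<beta>}" using assms(2) by auto
    ultimately show ?thesis
      using iterates_within_round[of "\<beta> - 1" \<omega> k] assms(2) by (simp add: t_def)
  qed
  moreover have "snapshot \<omega> t = xit Wb \<gamma> \<beta> g x0 \<omega> (\<beta> * k)"
    using iterates_within_round[of "\<beta> - 1" \<omega> k] assms(2) by (simp add: t_def)
  ultimately show ?thesis
    unfolding t using iterates_Suc(1)[of \<omega> t] t(2)
    by (simp add: node_avg_mix[OF assms(1)] node_avg_diff node_avg_scaleR)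
qed

lemma node_avg_xit_next_round_noise:
  fixes df :: "'n \<Rightarrow> 'a \<Rightarrow> 'a" and \<omega> :: "'n \<times> nat \<Rightarrow> 's" and k :: nat
  assumes "col_sums_one Wb" "\<beta> \<ge> 1"
  defines "x \<equiv> xit Wb \<gamma> \<beta> g x0 \<omega> (\<beta> * k)"
  shows "node_avg (xit Wb \<gamma> \<beta> g x0 \<omega> (\<beta> * (k + 1))) = node_avg x - (\<gamma> * real \<beta>) *\<^sub>R node_avg (\<lambda>i. df i (x i))
     + (\<Sum>(i, t) \<in> UNIV \<times> {\<beta> * k..<\<beta> * k + \<beta>}.
          (- \<gamma> / real CARD('n)) *\<^sub>R (g i (x i) (\<omega> (i, t)) - df i (x i)))"
proof -
  let ?N = "real CARD('n)" and ?T = "{\<beta> * k..<\<beta> * k + \<beta>}"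
  let ?G = "\<Sum>i\<in>UNIV. \<Sum>t\<in>?T. g i (x i) (\<omega> (i, t))"
  have "(\<Sum>l<\<beta>. node_avg (gradG g x \<omega> (\<beta> * k + l))) = (1 / ?N) *\<^sub>R ?G"
  proof -
    have "(\<Sum>l<\<beta>. g i (x i) (\<omega> (i, \<beta> * k + l))) = (\<Sum>t\<in>?T. g i (x i) (\<omega> (i, t)))" for i
      using sum.shift_bounds_nat_ivl[of "\<lambda>t. g i (x i) (\<omega> (i, t))" 0 "\<beta> * k" \<beta>]
      by (simp add: atLeast0LessThan add.commute)
    then show ?thesis
      by (simp add: node_avg_def gradG_def flip: scaleR_sum_right) (subst sum.swap, simp)
  qed
  moreover have "(\<Sum>(i, t) \<in> UNIV \<times> ?T. (- \<gamma> / ?N) *\<^sub>R (g i (x i) (\<omega> (i, t)) - df i (x i)))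
      = (- \<gamma> / ?N) *\<^sub>R (\<Sum>i\<in>UNIV. \<Sum>t\<in>?T. g i (x i) (\<omega> (i, t)) - df i (x i))"
    by (simp add: sum.cartesian_product[symmetric] scaleR_sum_right)
  moreover have "(\<Sum>i\<in>UNIV. \<Sum>t\<in>?T. g i (x i) (\<omega> (i, t)) - df i (x i))
      = ?G - real \<beta> *\<^sub>R (\<Sum>i\<in>UNIV. df i (x i))"
    by (simp add: sum_subtractf scaleR_sum_right sum_constant_scaleR)
  moreover have "node_avg (\<lambda>i. df i (x i)) = (1 / ?N) *\<^sub>R (\<Sum>i\<in>UNIV. df i (x i))"
    by (simp add: node_avg_def)
  moreover have "A - \<gamma> *\<^sub>R ((1 / ?N) *\<^sub>R G) = A - (\<gamma> * real \<beta>) *\<^sub>R ((1 / ?N) *\<^sub>R H)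
      + (- \<gamma> / ?N) *\<^sub>R (G - real \<beta> *\<^sub>R H)" for A G H :: 'a
    by (simp add: algebra_simps)
  ultimately show ?thesis
    using node_avg_xit_next_round[OF assms(1,2), of \<omega> k] unfolding x_def[symmetric]
    by (simp only:)
qed

lemma flexgt_depends_on_past:
  "(\<And>i s. s \<le> t \<Longrightarrow> \<omega> (i, s) = \<omega>' (i, s)) \<Longrightarrow> flexgt Wb \<gamma> \<beta> g x0 \<omega> t = flexgt Wb \<gamma> \<beta> g x0 \<omega>' t"
proof (induction t)
  case 0
  then show ?case by (simp add: gradG_def)
next
  case (Suc t)
  then have "flexgt Wb \<gamma> \<beta> g x0 \<omega> t = flexgt Wb \<gamma> \<beta> g x0 \<omega>' t"
    and "\<And>z s. s \<le> Suc t \<Longrightarrow> gradG g z \<omega> s = gradG g z \<omega>' s"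
    by (simp_all add: gradG_def)
  then show ?case by (simp add: Let_def split: prod.split)
qed

lemma iterates_depend_on_past:
  assumes "\<And>i s. s < t \<Longrightarrow> \<omega> (i, s) = \<omega>' (i, s)"
  shows "xit Wb \<gamma> \<beta> g x0 \<omega> t = xit Wb \<gamma> \<beta> g x0 \<omega>' t \<and> snapshot \<omega> t = snapshot \<omega>' t"
proof (cases t)
  case 0
  then show ?thesis by (simp add: iterates_0)
next
  case (Suc t')
  then have "flexgt Wb \<gamma> \<beta> g x0 \<omega> t' = flexgt Wb \<gamma> \<beta> g x0 \<omega>' t'"
    by (intro flexgt_depends_on_past assms) simp
  then show ?thesis unfolding Suc flexgt_eq_iterates by (simp add: iterates_Suc)
qed

end

section \<open>One round of exact gradient steps\<close>

lemma lipschitz_gradient_quadratic_bound: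
  fixes f :: "'a::real_inner \<Rightarrow> real"
  assumes grad: "\<And>x. (f has_derivative (\<lambda>h. df x \<bullet> h)) (at x)"
    and lipschitz: "\<And>x y. norm (df x - df y) \<le> L * norm (x - y)"
  shows "f y \<le> f x + df x \<bullet> (y - x) + L / 2 * (norm (y - x))\<^sup>2"
proof -
  define d where "d = y - x"
  define \<phi> where "\<phi> t = f (x + t *\<^sub>R d) - t * (df x \<bullet> d) - L / 2 * t\<^sup>2 * (norm d)\<^sup>2" for t
  have "(\<phi> has_real_derivative (df (x + t *\<^sub>R d) \<bullet> d - df x \<bullet> d - L * t * (norm d)\<^sup>2)) (at t)" for t
  proof -
    have "((\<lambda>t. x + t *\<^sub>R d) has_derivative (\<lambda>h. h *\<^sub>R d)) (at t)"
      by (auto intro!: derivative_eq_intros)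
    from has_derivative_compose[OF this grad]
    have "((\<lambda>t. f (x + t *\<^sub>R d)) has_real_derivative (df (x + t *\<^sub>R d) \<bullet> d)) (at t)"
      unfolding has_field_derivative_def by (simp add: mult.commute[of _ "df _ \<bullet> d"])
    then show ?thesis unfolding \<phi>_def
      by (auto intro!: derivative_eq_intros simp: power2_eq_square)
  qed
  moreover have "df (x + t *\<^sub>R d) \<bullet> d - df x \<bullet> d \<le> L * t * (norm d)\<^sup>2" if "0 \<le> t" for t
  proof -
    have "df (x + t *\<^sub>R d) \<bullet> d - df x \<bullet> d \<le> norm (df (x + t *\<^sub>R d) - df x) * norm d"
      by (metis inner_diff_left norm_cauchy_schwarz)
    also have "\<dots> \<le> L * norm (t *\<^sub>R d) * norm d"
      using lipschitz[of "x + t *\<^sub>R d" x] by (intro mult_right_mono) auto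
    finally show ?thesis using that by (simp add: power2_eq_square mult.assoc)
  qed
  ultimately have "\<phi> 1 \<le> \<phi> 0"
    by (intro DERIV_nonpos_imp_nonincreasing[of 0 1]) force+
  then show ?thesis unfolding \<phi>_def d_def by (simp add: algebra_simps)
qed

lemma norm_gradient_sq_le_gap:
  fixes F :: "'a::real_inner \<Rightarrow> real"
  assumes grad: "\<And>x. (F has_derivative (\<lambda>h. G x \<bullet> h)) (at x)"
    and lipschitz: "\<And>x y. norm (G x - G y) \<le> L * norm (x - y)"
    and "L > 0" and minimizer: "\<And>y. F xs \<le> F y"
  shows "(norm (G x))\<^sup>2 \<le> 2 * L * (F x - F xs)"
proof -
  define y where "y = x - (1 / L) *\<^sub>R G x"
  have "F xs \<le> F y" by (rule minimizer)
  also have "F y \<le> F x + G x \<bullet> (y - x) + L / 2 * (norm (y - x))\<^sup>2"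
    by (rule lipschitz_gradient_quadratic_bound[OF grad lipschitz])
  also have "G x \<bullet> (y - x) = - (norm (G x))\<^sup>2 / L"
    by (simp add: y_def power2_norm_eq_inner)
  also have "(norm (y - x))\<^sup>2 = (norm (G x))\<^sup>2 / L\<^sup>2"
    using \<open>L > 0\<close> by (simp add: y_def power_divide)
  finally show ?thesis using \<open>L > 0\<close> by (simp add: power2_eq_square field_simps)
qed

lemma node_avg_has_derivative:
  fixes f :: "'n::finite \<Rightarrow> 'a::real_inner \<Rightarrow> real"
  assumes "\<And>i x. (f i has_derivative (\<lambda>h. df i x \<bullet> h)) (at x)"
  shows "((\<lambda>x. node_avg (\<lambda>i. f i x)) has_derivative (\<lambda>h. node_avg (\<lambda>i. df i x) \<bullet> h)) (at x)"
proof -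
  have "((\<lambda>x. (1 / real CARD('n)) * (\<Sum>i\<in>UNIV. f i x)) has_derivative
      (\<lambda>h. (1 / real CARD('n)) * (\<Sum>i\<in>UNIV. df i x \<bullet> h))) (at x)"
    by (intro has_derivative_mult_right has_derivative_sum assms)
  then show ?thesis by (simp add: node_avg_def inner_sum_left)
qed

lemma node_avg_lipschitz:
  fixes df :: "'n::finite \<Rightarrow> 'a::real_normed_vector \<Rightarrow> 'b::real_normed_vector"
  assumes "\<And>i x y. norm (df i x - df i y) \<le> L * norm (x - y)"
  shows "norm (node_avg (\<lambda>i. df i x) - node_avg (\<lambda>i. df i y)) \<le> L * norm (x - y)"
proof -
  have "node_avg (\<lambda>i. df i x) - node_avg (\<lambda>i. df i y) = (1 / real CARD('n)) *\<^sub>R (\<Sum>i\<in>UNIV. df i x - df i y)"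
    by (simp add: node_avg_def sum_subtractf scaleR_diff_right)
  moreover have "norm (\<Sum>i\<in>UNIV. df i x - df i y) \<le> (\<Sum>i\<in>(UNIV::'n set). L * norm (x - y))"
    using assms by (intro sum_norm_le) auto
  ultimately show ?thesis by (simp add: divide_simps mult.commute)
qed

lemma power2_norm_add_le: "(norm (a + b))\<^sup>2 \<le> 2 * (norm a)\<^sup>2 + 2 * (norm b)\<^sup>2"
proof -
  have "(norm (a + b))\<^sup>2 \<le> (norm a + norm b)\<^sup>2"
    by (intro power_mono norm_triangle_ineq) simp
  also have "\<dots> \<le> 2 * (norm a)\<^sup>2 + 2 * (norm b)\<^sup>2"
    using zero_le_power2[of "norm a - norm b"] by (simp only: power2_sum power2_diff)
  finally show ?thesis .
qed

lemma norm_sum_squared_le: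
  fixes v :: "'n::finite \<Rightarrow> 'a::real_normed_vector"
  shows "(norm (\<Sum>i\<in>UNIV. v i))\<^sup>2 \<le> real CARD('n) * (\<Sum>i\<in>UNIV. (norm (v i))\<^sup>2)"
proof -
  have "(norm (\<Sum>i\<in>UNIV. v i))\<^sup>2 \<le> (\<Sum>i\<in>UNIV. norm (v i))\<^sup>2"
    by (intro power_mono norm_sum) simp
  also have "\<dots> \<le> (\<Sum>i\<in>UNIV. (norm (v i))\<^sup>2) * real CARD('n)"
    by (rule sum_squared_le_sum_of_squares)
  finally show ?thesis by (simp add: mult.commute)
qed

lemma sum_norm_sq_eq_consensus_err:
  fixes x :: "'n::finite \<Rightarrow> 'a::real_inner"
  shows "(\<Sum>i\<in>UNIV. (norm (x i - c))\<^sup>2) = consensus_err x + real CARD('n) * (norm (node_avg x - c))\<^sup>2"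
proof -
  let ?m = "node_avg x"
  have "(norm (x i - c))\<^sup>2 = (norm (x i - ?m))\<^sup>2 + 2 * ((x i - ?m) \<bullet> (?m - c)) + (norm (?m - c))\<^sup>2" for i
    using dot_norm[of "x i - ?m" "?m - c"] by simp
  moreover have "(\<Sum>i\<in>UNIV. (x i - ?m) \<bullet> (?m - c)) = 0"
    by (simp add: sum_subtractf node_avg_def sum_constant_scaleR flip: inner_sum_left)
  ultimately show ?thesis
    by (simp add: sum.distrib consensus_err_def flip: sum_distrib_left)
qed

context
  fixes f :: "'n::finite \<Rightarrow> 'a::real_inner \<Rightarrow> real" and df :: "'n \<Rightarrow> 'a \<Rightarrow> 'a" and \<mu> L :: real
  assumes grad: "\<And>i x. (f i has_derivative (\<lambda>h. df i x \<bullet> h)) (at x)"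
    and strongly_convex: "\<And>i x x'. f i x' - f i x \<ge> df i x \<bullet> (x' - x) + \<mu> / 2 * (norm (x' - x))\<^sup>2"
    and lipschitz: "\<And>i x y. norm (df i x - df i y) \<le> L * norm (x - y)"
begin

lemma inner_avg_gradient_ge:
  "node_avg (\<lambda>i. df i (x i)) \<bullet> (node_avg x - xs)
    \<ge> node_avg (\<lambda>i. f i (node_avg x)) - node_avg (\<lambda>i. f i xs)
      - (L - \<mu>) / (2 * real CARD('n)) * consensus_err x + \<mu> / 2 * (norm (node_avg x - xs))\<^sup>2"
proof -
  let ?N = "real CARD('n)" and ?xb = "node_avg x"
  have "df i (x i) \<bullet> (?xb - xs)
      \<ge> f i ?xb - f i xs - L / 2 * (norm (x i - ?xb))\<^sup>2 + \<mu> / 2 * (norm (x i - xs))\<^sup>2" for i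
  proof -
    have "f i ?xb \<le> f i (x i) + df i (x i) \<bullet> (?xb - x i) + L / 2 * (norm (?xb - x i))\<^sup>2"
      by (rule lipschitz_gradient_quadratic_bound[OF grad lipschitz])
    moreover have "f i xs - f i (x i) \<ge> df i (x i) \<bullet> (xs - x i) + \<mu> / 2 * (norm (xs - x i))\<^sup>2"
      by (rule strongly_convex)
    ultimately show ?thesis by (simp add: inner_diff_right norm_minus_commute)
  qed
  then have "(\<Sum>i\<in>UNIV. df i (x i) \<bullet> (?xb - xs))
      \<ge> (\<Sum>i\<in>UNIV. f i ?xb - f i xs - L / 2 * (norm (x i - ?xb))\<^sup>2 + \<mu> / 2 * (norm (x i - xs))\<^sup>2)"
    by (rule sum_mono)
  also have "(\<Sum>i\<in>UNIV. f i ?xb - f i xs - L / 2 * (norm (x i - ?xb))\<^sup>2 + \<mu> / 2 * (norm (x i - xs))\<^sup>2)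
      = (\<Sum>i\<in>UNIV. f i ?xb) - (\<Sum>i\<in>UNIV. f i xs) - L / 2 * (\<Sum>i\<in>UNIV. (norm (x i - ?xb))\<^sup>2)
        + \<mu> / 2 * (\<Sum>i\<in>UNIV. (norm (x i - xs))\<^sup>2)"
    by (simp add: sum.distrib sum_subtractf sum_distrib_left)
  also have "\<dots> = (\<Sum>i\<in>UNIV. f i ?xb) - (\<Sum>i\<in>UNIV. f i xs) - L / 2 * consensus_err x
        + \<mu> / 2 * (consensus_err x + ?N * (norm (?xb - xs))\<^sup>2)"
    by (simp add: sum_norm_sq_eq_consensus_err)
  finally have "(\<Sum>i\<in>UNIV. f i ?xb) - (\<Sum>i\<in>UNIV. f i xs) - L / 2 * consensus_err x
        + \<mu> / 2 * (consensus_err x + ?N * (norm (?xb - xs))\<^sup>2)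
      \<le> ?N * (node_avg (\<lambda>i. df i (x i)) \<bullet> (?xb - xs))"
    by (simp add: node_avg_def inner_sum_left)
  moreover have "(\<Sum>i\<in>UNIV. f i y) = ?N * node_avg (\<lambda>i. f i y)" for y
    by (simp add: node_avg_def)
  ultimately show ?thesis
    by (simp add: field_simps)
qed

lemma norm_avg_gradient_sq_le:
  assumes "L > 0" and minimizer: "\<And>y. node_avg (\<lambda>i. f i xs) \<le> node_avg (\<lambda>i. f i y)"
  shows "(norm (node_avg (\<lambda>i. df i (x i))))\<^sup>2
    \<le> 2 * L\<^sup>2 / real CARD('n) * consensus_err x
      + 4 * L * (node_avg (\<lambda>i. f i (node_avg x)) - node_avg (\<lambda>i. f i xs))"
proof -
  let ?N = "real CARD('n)" and ?xb = "node_avg x"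
  let ?h = "node_avg (\<lambda>i. df i (x i))" and ?G = "node_avg (\<lambda>i. df i ?xb)"
  have "(norm (?h - ?G))\<^sup>2 = (norm (\<Sum>i\<in>UNIV. df i (x i) - df i ?xb))\<^sup>2 / ?N\<^sup>2"
    by (simp add: node_avg_def sum_subtractf power_divide flip: scaleR_diff_right)
  also have "\<dots> \<le> ?N * (\<Sum>i\<in>UNIV. (norm (df i (x i) - df i ?xb))\<^sup>2) / ?N\<^sup>2"
    by (intro divide_right_mono norm_sum_squared_le) simp
  also have "\<dots> \<le> ?N * (\<Sum>i\<in>UNIV. L\<^sup>2 * (norm (x i - ?xb))\<^sup>2) / ?N\<^sup>2"
    using lipschitz by (intro divide_right_mono mult_left_mono sum_mono)
      (auto simp flip: power_mult_distrib intro: power_mono)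
  also have "\<dots> = L\<^sup>2 / ?N * consensus_err x"
    by (simp add: consensus_err_def power2_eq_square flip: sum_distrib_left)
  finally have "(norm (?h - ?G))\<^sup>2 \<le> L\<^sup>2 / ?N * consensus_err x" .
  moreover have "(norm ?G)\<^sup>2 \<le> 2 * L * (node_avg (\<lambda>i. f i ?xb) - node_avg (\<lambda>i. f i xs))"
    by (rule norm_gradient_sq_le_gap[OF node_avg_has_derivative[OF grad]
          node_avg_lipschitz[OF lipschitz] \<open>L > 0\<close> minimizer])
  ultimately show ?thesis
    using power2_norm_add_le[of "?h - ?G" ?G] by simp
qed

lemma avg_gradient_step_bound:
  assumes "\<mu> \<ge> 0" "L > 0" "a > 0" "a * L \<le> 1 / 4"
    and minimizer: "\<And>y. node_avg (\<lambda>i. f i xs) \<le> node_avg (\<lambda>i. f i y)"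
  shows "(norm (node_avg x - xs - a *\<^sub>R node_avg (\<lambda>i. df i (x i))))\<^sup>2
    \<le> (1 - \<mu> * a / 2) * (norm (node_avg x - xs))\<^sup>2 + 3 * a * L / real CARD('n) * consensus_err x
       - a * (node_avg (\<lambda>i. f i (node_avg x)) - node_avg (\<lambda>i. f i xs))"
proof -
  define N where "N = real CARD('n)"
  define c where "c = node_avg x - xs"
  define h where "h = node_avg (\<lambda>i. df i (x i))"
  define C where "C = consensus_err x"
  define \<Delta> where "\<Delta> = node_avg (\<lambda>i. f i (node_avg x)) - node_avg (\<lambda>i. f i xs)"
  define P where "P = a * L * C / N"
  define Q where "Q = a * \<Delta>"
  define M where "M = a * \<mu> * C / N"
  define R where "R = a * \<mu> * (norm c)\<^sup>2"
  have "N > 0" "C \<ge> 0" "\<Delta> \<ge> 0"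
    using minimizer[of "node_avg x"] by (simp_all add: N_def C_def \<Delta>_def consensus_err_def sum_nonneg)
  then have "P \<ge> 0" "Q \<ge> 0" "M \<ge> 0" "R \<ge> 0"
    using assms(1-3) by (simp_all add: P_def Q_def M_def R_def)
  have "(norm (c - a *\<^sub>R h))\<^sup>2 = (norm c)\<^sup>2 - 2 * a * (h \<bullet> c) + a\<^sup>2 * (norm h)\<^sup>2"
    using dot_norm_neg[of c "a *\<^sub>R h"] by (simp add: power_mult_distrib inner_commute)
  also have "\<dots> \<le> (norm c)\<^sup>2 - 2 * a * (\<Delta> - (L - \<mu>) / (2 * N) * C + \<mu> / 2 * (norm c)\<^sup>2)
      + a\<^sup>2 * (2 * L\<^sup>2 / N * C + 4 * L * \<Delta>)"
    using inner_avg_gradient_ge[of x xs] norm_avg_gradient_sq_le[OF \<open>L > 0\<close> minimizer, of x] \<open>a > 0\<close>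
    unfolding N_def c_def h_def C_def \<Delta>_def
    by (intro add_mono diff_left_mono mult_left_mono) (simp_all add: inner_commute)
  also have "\<dots> = (norm c)\<^sup>2 - 2 * Q + P - M - R + 2 * (a * L * P) + 4 * (a * L * Q)"
    using \<open>N > 0\<close> by (simp add: P_def Q_def M_def R_def power2_eq_square field_simps)
  also have "\<dots> \<le> (norm c)\<^sup>2 - R / 2 + 3 * P - Q"
  proof -
    have "a * L * P \<le> 1 / 4 * P" "a * L * Q \<le> 1 / 4 * Q"
      using \<open>a * L \<le> 1 / 4\<close> \<open>P \<ge> 0\<close> \<open>Q \<ge> 0\<close> by (intro mult_right_mono; simp)+
    then show ?thesis using \<open>P \<ge> 0\<close> \<open>M \<ge> 0\<close> \<open>R \<ge> 0\<close> by linarith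
  qed
  also have "\<dots> = (1 - \<mu> * a / 2) * (norm c)\<^sup>2 + 3 * a * L / N * C - a * \<Delta>"
    by (simp add: P_def Q_def R_def algebra_simps)
  finally show ?thesis by (simp add: N_def c_def h_def C_def \<Delta>_def)
qed

end

section \<open>Independent noise on a product probability space\<close>

lemma nn_integral_PiM_resample:
  fixes M :: "'i \<Rightarrow> 'b measure"
  assumes prob: "\<And>i. prob_space (M i)" and F[measurable]: "F \<in> borel_measurable (PiM UNIV M)"
  shows "(\<integral>\<^sup>+\<omega>. F \<omega> \<partial>PiM UNIV M) = (\<integral>\<^sup>+\<omega>. (\<integral>\<^sup>+y. F (fun_upd \<omega> q y) \<partial>M q) \<partial>PiM UNIV M)"
proof -
  define I where "I = UNIV - {q}"
  have I: "insert q I = UNIV" "I \<union> {q} = UNIV" by (auto simp: I_def)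
  interpret Mq: prob_space "M q" by (rule prob)
  interpret MI: prob_space "PiM I M" by (intro prob_space_PiM prob)
  interpret pair_sigma_finite "M q" "PiM I M" ..
  have upd: "(\<lambda>(y, \<omega>). fun_upd \<omega> q y) \<in> measurable (M q \<Otimes>\<^sub>M PiM I M) (PiM UNIV M)"
    using measurable_fun_upd[OF I(2)[symmetric], of "\<lambda>z. snd z" _ M "\<lambda>z. fst z"]
    by (simp add: case_prod_beta')
  have split_q: "(\<integral>\<^sup>+\<omega>. K \<omega> \<partial>PiM UNIV M) = (\<integral>\<^sup>+\<omega>. (\<integral>\<^sup>+y. K (fun_upd \<omega> q y) \<partial>M q) \<partial>PiM I M)"
    if K: "K \<in> borel_measurable (PiM UNIV M)" for K
  proof -
    have "(\<integral>\<^sup>+\<omega>. K \<omega> \<partial>PiM UNIV M)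
        = (\<integral>\<^sup>+\<omega>. K \<omega> \<partial>distr (M q \<Otimes>\<^sub>M PiM I M) (PiM UNIV M) (\<lambda>(y, \<omega>). fun_upd \<omega> q y))"
      using distr_pair_PiM_eq_PiM[of I M q] prob by (simp add: I)
    also have "\<dots> = (\<integral>\<^sup>+z. K ((\<lambda>(y, \<omega>). fun_upd \<omega> q y) z) \<partial>(M q \<Otimes>\<^sub>M PiM I M))"
      by (rule nn_integral_distr[OF upd]) (use K in simp)
    also have "\<dots> = (\<integral>\<^sup>+\<omega>. (\<integral>\<^sup>+y. K (fun_upd \<omega> q y) \<partial>M q) \<partial>PiM I M)"
      by (subst nn_integral_snd[symmetric]) (auto intro!: measurable_compose[OF upd K])
    finally show ?thesis .
  qed
  have "(\<lambda>\<omega>. \<integral>\<^sup>+y. F (fun_upd \<omega> q y) \<partial>M q) \<in> borel_measurable (PiM UNIV M)"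
  proof (rule Mq.borel_measurable_nn_integral)
    have "(\<lambda>(f, y). f(q := y)) \<in> measurable (PiM UNIV M \<Otimes>\<^sub>M M q) (PiM UNIV M)"
      using measurable_add_dim[of q UNIV M] by simp
    from measurable_compose[OF this F]
    show "(\<lambda>(\<omega>, y). F (fun_upd \<omega> q y)) \<in> borel_measurable (PiM UNIV M \<Otimes>\<^sub>M M q)"
      by (simp add: case_prod_beta')
  qed
  from split_q[OF this] split_q[OF F] show ?thesis
    by (simp add: nn_integral_const Mq.emeasure_space_1)
qed

text \<open>Neither v nor any summand depends on the coordinates in K, except that the q-th summand sees
  its own sample; so resampling the coordinates of K one at a time peels off the summands at a
  cost of s each.\<close>
lemma nn_integral_norm_sq_add_sum_le:
  fixes M :: "'q \<Rightarrow> 'b measure" and U :: "'q \<Rightarrow> 'b \<Rightarrow> ('q \<Rightarrow> 'b) \<Rightarrow> 'a::euclidean_space"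
    and v :: "('q \<Rightarrow> 'b) \<Rightarrow> 'a"
  assumes prob: "\<And>q. prob_space (M q)" and "finite K" "s \<ge> 0"
    and "v \<in> borel_measurable (PiM UNIV M)"
    and "\<And>\<omega> q y. q \<in> K \<Longrightarrow> v (fun_upd \<omega> q y) = v \<omega>"
    and "\<And>q. q \<in> K \<Longrightarrow> (\<lambda>\<omega>. U q (\<omega> q) \<omega>) \<in> borel_measurable (PiM UNIV M)"
    and "\<And>q q' \<omega> y y'. q \<in> K \<Longrightarrow> q' \<in> K \<Longrightarrow> U q y (fun_upd \<omega> q' y') = U q y \<omega>"
    and "\<And>q \<omega> w. q \<in> K \<Longrightarrow> (\<integral>\<^sup>+y. ennreal ((norm (w + U q y \<omega>))\<^sup>2) \<partial>M q) \<le> ennreal ((norm w)\<^sup>2 + s)"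
  shows "(\<integral>\<^sup>+\<omega>. ennreal ((norm (v \<omega> + (\<Sum>q\<in>K. U q (\<omega> q) \<omega>)))\<^sup>2) \<partial>PiM UNIV M)
     \<le> (\<integral>\<^sup>+\<omega>. ennreal ((norm (v \<omega>))\<^sup>2) \<partial>PiM UNIV M) + ennreal (real (card K) * s)"
  using assms(2,4-)
proof (induction K arbitrary: v rule: finite_induct)
  case empty
  then show ?case by simp
next
  case (insert q K)
  interpret prob_space "PiM UNIV M" by (intro prob_space_PiM prob)
  define v' where "v' \<omega> = v \<omega> + U q (\<omega> q) \<omega>" for \<omega>
  have v'_meas: "v' \<in> borel_measurable (PiM UNIV M)"
    unfolding v'_def using insert.prems(1,3) by auto
  have IH: "(\<integral>\<^sup>+\<omega>. ennreal ((norm (v' \<omega> + (\<Sum>q\<in>K. U q (\<omega> q) \<omega>)))\<^sup>2) \<partial>PiM UNIV M)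
     \<le> (\<integral>\<^sup>+\<omega>. ennreal ((norm (v' \<omega>))\<^sup>2) \<partial>PiM UNIV M) + ennreal (real (card K) * s)"
  proof (rule insert.IH[OF v'_meas])
    show "v' (fun_upd \<omega> q' y) = v' \<omega>" if "q' \<in> K" for \<omega> q' y
    proof -
      have "q' \<noteq> q" using that insert.hyps by auto
      then show ?thesis
        using that insert.prems(2)[of q' \<omega> y] insert.prems(4)[of q q' "\<omega> q" \<omega> y]
        by (simp add: v'_def fun_upd_def)
    qed
  qed (use insert.prems in auto)
  have resample_q: "(\<integral>\<^sup>+\<omega>. ennreal ((norm (v' \<omega>))\<^sup>2) \<partial>PiM UNIV M)
      \<le> (\<integral>\<^sup>+\<omega>. ennreal ((norm (v \<omega>))\<^sup>2) \<partial>PiM UNIV M) + ennreal s"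
  proof -
    have "(\<integral>\<^sup>+\<omega>. ennreal ((norm (v' \<omega>))\<^sup>2) \<partial>PiM UNIV M)
        = (\<integral>\<^sup>+\<omega>. (\<integral>\<^sup>+y. ennreal ((norm (v' (fun_upd \<omega> q y)))\<^sup>2) \<partial>M q) \<partial>PiM UNIV M)"
      using v'_meas by (intro nn_integral_PiM_resample prob) measurable
    also have "\<dots> = (\<integral>\<^sup>+\<omega>. (\<integral>\<^sup>+y. ennreal ((norm (v \<omega> + U q y \<omega>))\<^sup>2) \<partial>M q) \<partial>PiM UNIV M)"
      using insert.prems(2,4) by (simp add: v'_def fun_upd_def)
    also have "\<dots> \<le> (\<integral>\<^sup>+\<omega>. ennreal ((norm (v \<omega>))\<^sup>2) + ennreal s \<partial>PiM UNIV M)"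
      using insert.prems(5) \<open>s \<ge> 0\<close> by (intro nn_integral_mono) (simp add: ennreal_plus)
    also have "\<dots> = (\<integral>\<^sup>+\<omega>. ennreal ((norm (v \<omega>))\<^sup>2) \<partial>PiM UNIV M) + ennreal s"
      using insert.prems(1) by (simp add: nn_integral_add emeasure_space_1)
    finally show ?thesis .
  qed
  have "(\<integral>\<^sup>+\<omega>. ennreal ((norm (v \<omega> + (\<Sum>q\<in>insert q K. U q (\<omega> q) \<omega>)))\<^sup>2) \<partial>PiM UNIV M)
      = (\<integral>\<^sup>+\<omega>. ennreal ((norm (v' \<omega> + (\<Sum>q\<in>K. U q (\<omega> q) \<omega>)))\<^sup>2) \<partial>PiM UNIV M)"
    using insert.hyps by (simp add: v'_def add.assoc)
  also have "\<dots> \<le> (\<integral>\<^sup>+\<omega>. ennreal ((norm (v \<omega>))\<^sup>2) \<partial>PiM UNIV M) + ennreal s + ennreal (real (card K) * s)"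
    using IH resample_q by (meson add_right_mono order_trans)
  also have "\<dots> = (\<integral>\<^sup>+\<omega>. ennreal ((norm (v \<omega>))\<^sup>2) \<partial>PiM UNIV M) + ennreal (real (card (insert q K)) * s)"
    using insert.hyps \<open>s \<ge> 0\<close> by (simp add: add.assoc algebra_simps flip: ennreal_plus)
  finally show ?case .
qed

definition square_integrable :: "'b measure \<Rightarrow> ('b \<Rightarrow> 'a::real_normed_vector) \<Rightarrow> bool" where
  "square_integrable M f \<longleftrightarrow> f \<in> borel_measurable M \<and> integrable M (\<lambda>\<omega>. (norm (f \<omega>))\<^sup>2)"

context
  fixes M :: "'b measure"
begin

lemma square_integrable_const:
  "finite_measure M \<Longrightarrow> square_integrable M (\<lambda>_. c :: 'a::{real_normed_vector, second_countable_topology})"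
  by (simp add: square_integrable_def finite_measure.integrable_const)

lemma square_integrable_add:
  fixes f g :: "'b \<Rightarrow> 'a::{real_normed_vector, second_countable_topology}"
  assumes "square_integrable M f" "square_integrable M g"
  shows "square_integrable M (\<lambda>\<omega>. f \<omega> + g \<omega>)"
proof -
  have "integrable M (\<lambda>\<omega>. 2 * (norm (f \<omega>))\<^sup>2 + 2 * (norm (g \<omega>))\<^sup>2)"
    using assms by (simp add: square_integrable_def)
  moreover have "(\<lambda>\<omega>. f \<omega> + g \<omega>) \<in> borel_measurable M"
    using assms by (auto simp: square_integrable_def intro: borel_measurable_add)
  ultimately show ?thesis
    unfolding square_integrable_def
    by (auto intro!: Bochner_Integration.integrable_bound[where f="\<lambda>\<omega>. 2 * (norm (f \<omega>))\<^sup>2 + 2 * (norm (g \<omega>))\<^sup>2"]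
        simp: power2_norm_add_le)
qed

lemma square_integrable_scaleR:
  fixes f :: "'b \<Rightarrow> 'a::{real_normed_vector, second_countable_topology}"
  shows "square_integrable M f \<Longrightarrow> square_integrable M (\<lambda>\<omega>. c *\<^sub>R f \<omega>)"
  by (auto simp: square_integrable_def power_mult_distrib intro: borel_measurable_scaleR)

lemma square_integrable_diff:
  fixes f g :: "'b \<Rightarrow> 'a::{real_normed_vector, second_countable_topology}"
  assumes "square_integrable M f" "square_integrable M g"
  shows "square_integrable M (\<lambda>\<omega>. f \<omega> - g \<omega>)"
  using square_integrable_add[OF assms(1) square_integrable_scaleR[OF assms(2), of "- 1"]] by simp

lemma square_integrable_sum:
  fixes f :: "'i \<Rightarrow> 'b \<Rightarrow> 'a::{real_normed_vector, second_countable_topology}"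
  shows "(\<And>s. s \<in> S \<Longrightarrow> square_integrable M (f s)) \<Longrightarrow> square_integrable M (\<lambda>\<omega>. \<Sum>s\<in>S. f s \<omega>)"
proof (induction S rule: infinite_finite_induct)
  case (insert s S)
  then show ?case by (simp add: square_integrable_add)
qed (simp_all add: square_integrable_def)

lemma square_integrable_mix:
  fixes X :: "'b \<Rightarrow> 'n::finite \<Rightarrow> 'a::{real_normed_vector, second_countable_topology}"
  shows "(\<And>j. square_integrable M (\<lambda>\<omega>. X \<omega> j)) \<Longrightarrow> square_integrable M (\<lambda>\<omega>. mix A (X \<omega>) i)"
  unfolding mix_def by (rule square_integrable_sum, rule square_integrable_scaleR)

lemma square_integrable_node_avg:
  fixes X :: "'b \<Rightarrow> 'n::finite \<Rightarrow> 'a::{real_normed_vector, second_countable_topology}"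
  assumes "\<And>i. square_integrable M (\<lambda>\<omega>. X \<omega> i)"
  shows "square_integrable M (\<lambda>\<omega>. node_avg (X \<omega>))"
proof -
  have "square_integrable M (\<lambda>\<omega>. \<Sum>i\<in>UNIV. X \<omega> i)"
    using assms by (rule square_integrable_sum)
  then show ?thesis unfolding node_avg_def by (rule square_integrable_scaleR)
qed

lemma square_integrable_imp_integrable_norm:
  fixes f :: "'b \<Rightarrow> 'a::{real_normed_vector, second_countable_topology}"
  assumes "finite_measure M" "square_integrable M f"
  shows "integrable M (\<lambda>\<omega>. norm (f \<omega>))"
proof -
  interpret finite_measure M by fact
  have "(\<lambda>\<omega>. norm (f \<omega>)) \<in> borel_measurable M" "integrable M (\<lambda>\<omega>. (norm (f \<omega>))\<^sup>2)"
    using assms(2) by (auto simp: square_integrable_def intro: borel_measurable_norm)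
  then show ?thesis by (rule square_integrable_imp_integrable)
qed

end

lemma continuous_on_if_lipschitz_bound:
  fixes F :: "'a::real_normed_vector \<Rightarrow> 'b::real_normed_vector"
  assumes "\<And>x y. norm (F x - F y) \<le> L * norm (x - y)"
  shows "continuous_on UNIV F"
proof (rule lipschitz_on_continuous_on[OF lipschitz_onI[of UNIV F "max L 0"]])
  show "dist (F x) (F y) \<le> max L 0 * dist x y" for x y
    using assms[of x y] by (simp add: dist_norm) (meson max.cobounded1 mult_right_mono norm_ge_zero order_trans)
qed simp

lemma integrable_optimality_gap:
  fixes F :: "'a::euclidean_space \<Rightarrow> real" and X :: "'b \<Rightarrow> 'a"
  assumes "finite_measure M" "square_integrable M X"
    and grad: "\<And>x. (F has_derivative (\<lambda>h. G x \<bullet> h)) (at x)"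
    and lipschitz: "\<And>x y. norm (G x - G y) \<le> L * norm (x - y)"
    and minimizer: "\<And>y. F xs \<le> F y"
  shows "integrable M (\<lambda>\<omega>. F (X \<omega>) - F xs)"
proof (rule Bochner_Integration.integrable_bound)
  have "square_integrable M (\<lambda>\<omega>. X \<omega> - xs)"
    using assms(1,2) by (intro square_integrable_diff square_integrable_const)
  with assms(1) show "integrable M (\<lambda>\<omega>. norm (G xs) * norm (X \<omega> - xs) + L / 2 * (norm (X \<omega> - xs))\<^sup>2)"
    by (auto simp: square_integrable_def dest: square_integrable_imp_integrable_norm)
  have "continuous_on UNIV F"
    using has_derivative_continuous[OF grad] by (blast intro: continuous_at_imp_continuous_on)
  then have [measurable]: "F \<in> borel_measurable borel"
    by (rule borel_measurable_continuous_onI)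
  have [measurable]: "X \<in> borel_measurable M"
    using assms(2) by (simp add: square_integrable_def)
  show "(\<lambda>\<omega>. F (X \<omega>) - F xs) \<in> borel_measurable M"
    by measurable
  have "F y - F xs \<le> norm (G xs) * norm (y - xs) + L / 2 * (norm (y - xs))\<^sup>2" for y
    using lipschitz_gradient_quadratic_bound[OF grad lipschitz, of y xs] norm_cauchy_schwarz[of "G xs" "y - xs"]
    by linarith
  moreover have "0 \<le> F y - F xs" for y
    using minimizer[of y] by simp
  ultimately show "AE \<omega> in M. norm (F (X \<omega>) - F xs)
      \<le> norm (norm (G xs) * norm (X \<omega> - xs) + L / 2 * (norm (X \<omega> - xs))\<^sup>2)"
    by (intro AE_I2) (smt (verit, best) real_norm_def)
qed

section \<open>The stochastic gradient oracle\<close>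

context
  fixes D :: "'n::finite \<Rightarrow> 's measure" and g :: "'n \<Rightarrow> 'a::euclidean_space \<Rightarrow> 's \<Rightarrow> 'a"
    and df :: "'n \<Rightarrow> 'a \<Rightarrow> 'a" and \<sigma> L :: real
  assumes prob: "\<And>i. prob_space (D i)"
    and meas: "\<And>i. (\<lambda>(x, s). g i x s) \<in> borel_measurable (borel \<Otimes>\<^sub>M D i)"
    and unbiased: "\<And>i x. integrable (D i) (g i x) \<and> (\<integral>s. g i x s \<partial>D i) = df i x"
    and variance: "\<And>i x. (\<integral>\<^sup>+s. ennreal ((norm (g i x s - df i x))\<^sup>2) \<partial>D i) \<le> ennreal (\<sigma>\<^sup>2)"
    and lipschitz: "\<And>i x y. norm (df i x - df i y) \<le> L * norm (x - y)"
begin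

abbreviation sample_space :: "('n \<times> nat \<Rightarrow> 's) measure" where
  "sample_space \<equiv> PiM UNIV (\<lambda>(i, t). D i)"

lemma prob_space_sample: "prob_space ((\<lambda>(i, t). D i) q)"
  by (cases q) (simp add: prob)

lemma prob_space_sample_space: "prob_space sample_space"
  by (rule prob_space_PiM) (simp add: prob_space_sample)

lemma measurable_coordinate: "(\<lambda>\<omega>. \<omega> (i, t)) \<in> measurable sample_space (D i)"
  using measurable_component_singleton[of "(i, t)" UNIV "\<lambda>(i, t). D i"] by simp

lemma measurable_sample_grad: "g i x \<in> borel_measurable (D i)"
  using measurable_compose[OF measurable_Pair1'[of x borel "D i"] meas[of i]] by simp

lemma measurable_grad [measurable]: "df i \<in> borel_measurable borel"
  using continuous_on_if_lipschitz_bound[OF lipschitz] by (rule borel_measurable_continuous_onI)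

lemma nn_integral_norm_sq_add_noise_le:
  "(\<integral>\<^sup>+y. ennreal ((norm (w + c *\<^sub>R (g i x y - df i x)))\<^sup>2) \<partial>D i) \<le> ennreal ((norm w)\<^sup>2 + c\<^sup>2 * \<sigma>\<^sup>2)"
proof -
  interpret prob_space "D i" by (rule prob)
  define e where "e y = g i x y - df i x" for y
  have sq: "(norm (w + c *\<^sub>R e y))\<^sup>2 = (norm w)\<^sup>2 + 2 * c * (w \<bullet> e y) + c\<^sup>2 * (norm (e y))\<^sup>2" for y
    using dot_norm[of w "c *\<^sub>R e y"] by (simp add: power_mult_distrib)
  have e: "integrable (D i) e" "(\<integral>y. e y \<partial>D i) = 0"
    using unbiased[of i x] by (auto simp: e_def[abs_def] prob_space Bochner_Integration.integral_diff)
  have e_sq_m: "(\<lambda>y. (norm (e y))\<^sup>2) \<in> borel_measurable (D i)"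
    using measurable_sample_grad unfolding e_def by measurable
  have e_sq_nn: "(\<integral>\<^sup>+y. ennreal ((norm (e y))\<^sup>2) \<partial>D i) \<le> ennreal (\<sigma>\<^sup>2)"
    using variance by (simp add: e_def)
  then have e_sq: "integrable (D i) (\<lambda>y. (norm (e y))\<^sup>2)"
    using e_sq_m by (auto simp: integrable_iff_bounded top.not_eq_extremum intro: le_less_trans)
  have "integrable (D i) (\<lambda>y. (norm w)\<^sup>2 + 2 * c * (w \<bullet> e y) + c\<^sup>2 * (norm (e y))\<^sup>2)"
    using e e_sq by auto
  then have "(\<integral>\<^sup>+y. ennreal ((norm (w + c *\<^sub>R e y))\<^sup>2) \<partial>D i)
      = ennreal (\<integral>y. (norm w)\<^sup>2 + 2 * c * (w \<bullet> e y) + c\<^sup>2 * (norm (e y))\<^sup>2 \<partial>D i)"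
    unfolding sq by (rule nn_integral_eq_integral) (simp flip: sq)
  also have "\<dots> \<le> ennreal ((norm w)\<^sup>2 + c\<^sup>2 * \<sigma>\<^sup>2)"
  proof (rule ennreal_leI)
    have "(\<integral>y. (norm (e y))\<^sup>2 \<partial>D i) \<le> \<sigma>\<^sup>2"
      using integral_eq_nn_integral[OF e_sq_m] e_sq_nn by (simp add: enn2real_leI)
    then show "(\<integral>y. (norm w)\<^sup>2 + 2 * c * (w \<bullet> e y) + c\<^sup>2 * (norm (e y))\<^sup>2 \<partial>D i) \<le> (norm w)\<^sup>2 + c\<^sup>2 * \<sigma>\<^sup>2"
      using e e_sq by (simp add: prob_space mult_left_mono)
  qed
  finally show ?thesis by (simp only: e_def)
qed

lemma square_integrable_sample_grad:
  assumes z: "square_integrable sample_space z" and indep: "\<And>\<omega> y. z (fun_upd \<omega> (i, t) y) = z \<omega>"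
  shows "square_integrable sample_space (\<lambda>\<omega>. g i (z \<omega>) (\<omega> (i, t)))"
proof -
  interpret prob_space sample_space by (rule prob_space_sample_space)
  have [measurable]: "z \<in> borel_measurable sample_space"
    using z by (simp add: square_integrable_def)
  have meas [measurable]: "(\<lambda>\<omega>. g i (z \<omega>) (\<omega> (i, t))) \<in> borel_measurable sample_space"
    using measurable_compose[OF measurable_Pair[OF _ measurable_coordinate] meas[of i]] by simp
  have bound: "(\<integral>\<^sup>+y. ennreal ((norm (g i x y))\<^sup>2) \<partial>D i)
      \<le> ennreal (2 * L\<^sup>2 * (norm x)\<^sup>2 + 2 * (norm (df i 0))\<^sup>2 + \<sigma>\<^sup>2)" for x
  proof -
    have "(\<integral>\<^sup>+y. ennreal ((norm (g i x y))\<^sup>2) \<partial>D i) \<le> ennreal ((norm (df i x))\<^sup>2 + \<sigma>\<^sup>2)"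
      using nn_integral_norm_sq_add_noise_le[where w="df i x" and c=1 and i=i and x=x]
      by (simp del: ennreal_plus)
    also have "\<dots> \<le> ennreal (2 * L\<^sup>2 * (norm x)\<^sup>2 + 2 * (norm (df i 0))\<^sup>2 + \<sigma>\<^sup>2)"
    proof (rule ennreal_leI)
      have "(norm (df i x - df i 0))\<^sup>2 \<le> (L * norm x)\<^sup>2"
        using lipschitz[of i x 0] by (intro power_mono) auto
      then show "(norm (df i x))\<^sup>2 + \<sigma>\<^sup>2 \<le> 2 * L\<^sup>2 * (norm x)\<^sup>2 + 2 * (norm (df i 0))\<^sup>2 + \<sigma>\<^sup>2"
        using power2_norm_add_le[of "df i x - df i 0" "df i 0"] by (simp add: power_mult_distrib)
    qed
    finally show ?thesis .
  qed
  have "(\<integral>\<^sup>+\<omega>. ennreal ((norm (g i (z \<omega>) (\<omega> (i, t))))\<^sup>2) \<partial>sample_space)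
     = (\<integral>\<^sup>+\<omega>. (\<integral>\<^sup>+y. ennreal ((norm (g i (z \<omega>) y))\<^sup>2) \<partial>D i) \<partial>sample_space)"
    using nn_integral_PiM_resample[where M="\<lambda>(i, t). D i" and q="(i, t)", OF prob_space_sample]
      meas by (simp add: indep)
  also have "\<dots> \<le> (\<integral>\<^sup>+\<omega>. ennreal (2 * L\<^sup>2 * (norm (z \<omega>))\<^sup>2 + 2 * (norm (df i 0))\<^sup>2 + \<sigma>\<^sup>2) \<partial>sample_space)"
    by (intro nn_integral_mono bound)
  also have "\<dots> < \<infinity>"
    using z by (subst nn_integral_eq_integral) (auto simp: square_integrable_def)
  finally show ?thesis
    using meas by (simp add: square_integrable_def integrable_iff_bounded)
qed

lemma iterates_square_integrable:
  "\<forall>i. square_integrable sample_space (\<lambda>\<omega>. xit Wb \<gamma> \<beta> g x0 \<omega> t i)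
     \<and> square_integrable sample_space (\<lambda>\<omega>. y_iter Wb \<gamma> \<beta> g x0 \<omega> t i)
     \<and> square_integrable sample_space (\<lambda>\<omega>. snapshot Wb \<gamma> \<beta> g x0 \<omega> t i)
     \<and> square_integrable sample_space (\<lambda>\<omega>. round_sum Wb \<gamma> \<beta> g x0 \<omega> t i)"
proof (induction t)
  case 0
  have x0: "square_integrable sample_space (\<lambda>\<omega>. x0 i)" for i
    using prob_space_sample_space by (simp add: prob_space_def square_integrable_const)
  then have "square_integrable sample_space (\<lambda>\<omega>. gradG g x0 \<omega> 0 i)" for i
    unfolding gradG_def by (rule square_integrable_sample_grad) simp
  with x0 show ?case by (simp add: iterates_0)
next
  case (Suc t)
  note IH = Suc.IH[rule_format]
  let ?sq = "square_integrable sample_space"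
  have X: "?sq (\<lambda>\<omega>. xit Wb \<gamma> \<beta> g x0 \<omega> (Suc t) i)" for i
    using IH by (cases "\<beta> dvd Suc t")
      (simp_all add: iterates_Suc square_integrable_mix square_integrable_diff square_integrable_scaleR)
  have G_new: "?sq (\<lambda>\<omega>. gradG g (xit Wb \<gamma> \<beta> g x0 \<omega> (Suc t)) \<omega> (Suc t) i)" for i
    unfolding gradG_def
  proof (rule square_integrable_sample_grad[OF X])
    show "xit Wb \<gamma> \<beta> g x0 (fun_upd \<omega> (i, Suc t) y) (Suc t) i = xit Wb \<gamma> \<beta> g x0 \<omega> (Suc t) i" for \<omega> y
      using iterates_depend_on_past[where t="Suc t" and \<omega>="fun_upd \<omega> (i, Suc t) y" and \<omega>'=\<omega> and g=g] by auto
  qed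
  have G_snap: "?sq (\<lambda>\<omega>. gradG g (snapshot Wb \<gamma> \<beta> g x0 \<omega> t) \<omega> s i)" if "s = t \<or> s = Suc t" for i s
    unfolding gradG_def
  proof (rule square_integrable_sample_grad)
    show "?sq (\<lambda>\<omega>. snapshot Wb \<gamma> \<beta> g x0 \<omega> t i)" using IH by simp
    show "snapshot Wb \<gamma> \<beta> g x0 (fun_upd \<omega> (i, s) y) t i = snapshot Wb \<gamma> \<beta> g x0 \<omega> t i" for \<omega> y
      using iterates_depend_on_past[where t=t and \<omega>="fun_upd \<omega> (i, s) y" and \<omega>'=\<omega> and g=g] that by auto
  qed
  have Y: "?sq (\<lambda>\<omega>. y_iter Wb \<gamma> \<beta> g x0 \<omega> (Suc t) i)" for i
    using IH G_new G_snap by (cases "\<beta> dvd Suc t")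
      (simp_all add: iterates_Suc square_integrable_mix square_integrable_diff square_integrable_add)
  have "?sq (\<lambda>\<omega>. snapshot Wb \<gamma> \<beta> g x0 \<omega> (Suc t) i)" "?sq (\<lambda>\<omega>. round_sum Wb \<gamma> \<beta> g x0 \<omega> (Suc t) i)" for i
    using IH X Y by (cases "\<beta> dvd Suc t"; simp add: iterates_Suc square_integrable_add)+
  with X Y show ?case by blast
qed

lemma nn_integral_next_round_le:
  fixes Wb :: "real^'n^'n" and \<gamma> :: real and \<beta> k :: nat and x0 :: "'n \<Rightarrow> 'a"
  assumes "col_sums_one Wb" "\<beta> \<ge> 1"
  defines "x \<equiv> \<lambda>\<omega>. xit Wb \<gamma> \<beta> g x0 \<omega> (\<beta> * k)"
  shows "(\<integral>\<^sup>+\<omega>. ennreal ((norm (node_avg (xit Wb \<gamma> \<beta> g x0 \<omega> (\<beta> * (k + 1))) - xs))\<^sup>2) \<partial>sample_space)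
    \<le> (\<integral>\<^sup>+\<omega>. ennreal ((norm (node_avg (x \<omega>) - xs - (\<gamma> * real \<beta>) *\<^sub>R node_avg (\<lambda>i. df i (x \<omega> i))))\<^sup>2)
          \<partial>sample_space)
      + ennreal (\<gamma>\<^sup>2 * real \<beta> * \<sigma>\<^sup>2 / real CARD('n))"
proof -
  define N where "N = real CARD('n)"
  define K where "K = (UNIV :: 'n set) \<times> {\<beta> * k..<\<beta> * k + \<beta>}"
  define U :: "'n \<times> nat \<Rightarrow> 's \<Rightarrow> ('n \<times> nat \<Rightarrow> 's) \<Rightarrow> 'a"
    where "U q y \<omega> = (- \<gamma> / N) *\<^sub>R (g (fst q) (x \<omega> (fst q)) y - df (fst q) (x \<omega> (fst q)))" for q y \<omega>
  define v where "v \<omega> = node_avg (x \<omega>) - xs - (\<gamma> * real \<beta>) *\<^sub>R node_avg (\<lambda>i. df i (x \<omega> i))" for \<omega>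
  have x_sq: "square_integrable sample_space (\<lambda>\<omega>. x \<omega> i)" for i
    using iterates_square_integrable by (simp add: x_def)
  then have [measurable]: "(\<lambda>\<omega>. x \<omega> i) \<in> borel_measurable sample_space" for i
    by (simp add: square_integrable_def)
  have x_indep: "x (fun_upd \<omega> q y) = x \<omega>" if "q \<in> K" for \<omega> q y
    using that iterates_depend_on_past[where t="\<beta> * k" and \<omega>="fun_upd \<omega> q y" and \<omega>'=\<omega> and g=g]
    by (auto simp: x_def K_def)
  have ident: "node_avg (xit Wb \<gamma> \<beta> g x0 \<omega> (\<beta> * (k + 1))) - xs = v \<omega> + (\<Sum>q\<in>K. U q (\<omega> q) \<omega>)" for \<omega>
    using node_avg_xit_next_round_noise[OF assms(1,2), where df=df and \<omega>=\<omega> and k=k and g=g]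
    by (simp add: v_def U_def K_def N_def x_def case_prod_unfold)
  have noise: "(\<integral>\<^sup>+\<omega>. ennreal ((norm (v \<omega> + (\<Sum>q\<in>K. U q (\<omega> q) \<omega>)))\<^sup>2) \<partial>sample_space)
      \<le> (\<integral>\<^sup>+\<omega>. ennreal ((norm (v \<omega>))\<^sup>2) \<partial>sample_space) + ennreal (real (card K) * ((\<gamma> / N)\<^sup>2 * \<sigma>\<^sup>2))"
  proof (rule nn_integral_norm_sq_add_sum_le[where U=U and v=v, OF prob_space_sample])
    show "v \<in> borel_measurable sample_space"
      unfolding v_def node_avg_def by measurable
    show "(\<lambda>\<omega>. U q (\<omega> q) \<omega>) \<in> borel_measurable sample_space" if "q \<in> K" for q
    proof -
      obtain i t where q: "q = (i, t)" by (cases q)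
      have "square_integrable sample_space (\<lambda>\<omega>. g i (x \<omega> i) (\<omega> (i, t)))"
        using that x_indep by (intro square_integrable_sample_grad x_sq) (simp add: q)
      then have [measurable]: "(\<lambda>\<omega>. g i (x \<omega> i) (\<omega> (i, t))) \<in> borel_measurable sample_space"
        by (simp add: square_integrable_def)
      show ?thesis unfolding U_def q fst_conv by measurable
    qed
    show "(\<integral>\<^sup>+y. ennreal ((norm (w + U q y \<omega>))\<^sup>2) \<partial>(\<lambda>(i, t). D i) q) \<le> ennreal ((norm w)\<^sup>2 + (\<gamma> / N)\<^sup>2 * \<sigma>\<^sup>2)"
      if "q \<in> K" for q \<omega> w
      using nn_integral_norm_sq_add_noise_le[where c="- \<gamma> / N" and i="fst q"]
      by (cases q) (simp add: U_def power_divide)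
    show "v (fun_upd \<omega> q y) = v \<omega>" if "q \<in> K" for \<omega> q y
      using x_indep[OF that] by (simp add: v_def)
    show "U q y (fun_upd \<omega> q' y') = U q y \<omega>" if "q \<in> K" "q' \<in> K" for q q' \<omega> y y'
      using x_indep[OF that(2)] by (simp add: U_def)
  qed (simp_all add: K_def)
  have "real (card K) * ((\<gamma> / N)\<^sup>2 * \<sigma>\<^sup>2) = \<gamma>\<^sup>2 * real \<beta> * \<sigma>\<^sup>2 / real CARD('n)"
    by (simp add: K_def N_def card_cartesian_product power2_eq_square field_simps)
  with noise show ?thesis by (simp only: ident v_def)
qed

lemma expected_round_bound:
  fixes f :: "'n \<Rightarrow> 'a \<Rightarrow> real" and Wb :: "real^'n^'n" and \<gamma> \<mu> :: real and \<beta> k :: nat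
    and x0 :: "'n \<Rightarrow> 'a" and xs :: 'a
  assumes grad: "\<And>i x. (f i has_derivative (\<lambda>h. df i x \<bullet> h)) (at x)"
    and strongly_convex: "\<And>i x x'. f i x' - f i x \<ge> df i x \<bullet> (x' - x) + \<mu> / 2 * (norm (x' - x))\<^sup>2"
    and "\<mu> \<ge> 0" and minimizer: "\<And>y. node_avg (\<lambda>i. f i xs) \<le> node_avg (\<lambda>i. f i y)"
    and "col_sums_one Wb" "\<beta> \<ge> 1" "\<gamma> > 0" "L > 0" "\<gamma> * real \<beta> * L \<le> 1 / 4"
  defines "x \<equiv> \<lambda>\<omega>. xit Wb \<gamma> \<beta> g x0 \<omega> (\<beta> * k)"
  shows "(\<integral>\<omega>. (norm (node_avg (xit Wb \<gamma> \<beta> g x0 \<omega> (\<beta> * (k + 1))) - xs))\<^sup>2 \<partial>sample_space)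
     \<le> (1 - \<mu> * real \<beta> * \<gamma> / 2) * (\<integral>\<omega>. (norm (node_avg (x \<omega>) - xs))\<^sup>2 \<partial>sample_space)
       + \<gamma>\<^sup>2 * real \<beta> * \<sigma>\<^sup>2 / real CARD('n)
       + 3 * \<gamma> * real \<beta> * L / real CARD('n) * (\<integral>\<omega>. consensus_err (x \<omega>) \<partial>sample_space)
       - \<gamma> * real \<beta> * (\<integral>\<omega>. node_avg (\<lambda>i. f i (node_avg (x \<omega>))) - node_avg (\<lambda>i. f i xs) \<partial>sample_space)"
proof -
  interpret prob_space sample_space by (rule prob_space_sample_space)
  define a where "a = \<gamma> * real \<beta>"
  define R where "R \<omega> = (1 - \<mu> * a / 2) * (norm (node_avg (x \<omega>) - xs))\<^sup>2
      + 3 * a * L / real CARD('n) * consensus_err (x \<omega>)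
      - a * (node_avg (\<lambda>i. f i (node_avg (x \<omega>))) - node_avg (\<lambda>i. f i xs))" for \<omega>
  have det: "(norm (node_avg (x \<omega>) - xs - a *\<^sub>R node_avg (\<lambda>i. df i (x \<omega> i))))\<^sup>2 \<le> R \<omega>" for \<omega>
    unfolding R_def using assms(3,6-9)
    by (intro avg_gradient_step_bound[OF grad strongly_convex lipschitz _ _ _ _ minimizer])
      (simp_all add: a_def)
  have x_sq: "square_integrable sample_space (\<lambda>\<omega>. x \<omega> i)" for i
    using iterates_square_integrable by (simp add: x_def)
  have xb_sq: "square_integrable sample_space (\<lambda>\<omega>. node_avg (x \<omega>) - xs)"
    using x_sq by (intro square_integrable_diff square_integrable_node_avg square_integrable_const) auto
  have "square_integrable sample_space (\<lambda>\<omega>. x \<omega> i - node_avg (x \<omega>))" for i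
    using x_sq by (intro square_integrable_diff square_integrable_node_avg)
  then have "integrable sample_space (\<lambda>\<omega>. consensus_err (x \<omega>))"
    unfolding consensus_err_def square_integrable_def by (auto intro!: Bochner_Integration.integrable_sum)
  moreover have "integrable sample_space (\<lambda>\<omega>. node_avg (\<lambda>i. f i (node_avg (x \<omega>))) - node_avg (\<lambda>i. f i xs))"
    using x_sq by (intro integrable_optimality_gap[OF _ _ node_avg_has_derivative[OF grad]
          node_avg_lipschitz[OF lipschitz] minimizer] square_integrable_node_avg) auto
  moreover have "integrable sample_space (\<lambda>\<omega>. (norm (node_avg (x \<omega>) - xs))\<^sup>2)"
    using xb_sq by (simp add: square_integrable_def)
  ultimately have R_int: "integrable sample_space R"
    and R_eq: "(\<integral>\<omega>. R \<omega> \<partial>sample_space) = (1 - \<mu> * a / 2) * (\<integral>\<omega>. (norm (node_avg (x \<omega>) - xs))\<^sup>2 \<partial>sample_space)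
      + 3 * a * L / real CARD('n) * (\<integral>\<omega>. consensus_err (x \<omega>) \<partial>sample_space)
      - a * (\<integral>\<omega>. node_avg (\<lambda>i. f i (node_avg (x \<omega>))) - node_avg (\<lambda>i. f i xs) \<partial>sample_space)"
    unfolding R_def by simp_all
  have "R \<omega> \<ge> 0" for \<omega>
    using det[of \<omega>] by (meson order_trans zero_le_power2)
  have "square_integrable sample_space
      (\<lambda>\<omega>. node_avg (xit Wb \<gamma> \<beta> g x0 \<omega> (\<beta> * (k + 1))) - xs)"
    using iterates_square_integrable
    by (intro square_integrable_diff square_integrable_node_avg square_integrable_const) auto
  then have "(\<integral>\<omega>. (norm (node_avg (xit Wb \<gamma> \<beta> g x0 \<omega> (\<beta> * (k + 1))) - xs))\<^sup>2 \<partial>sample_space)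
      = enn2real (\<integral>\<^sup>+\<omega>. ennreal ((norm (node_avg (xit Wb \<gamma> \<beta> g x0 \<omega> (\<beta> * (k + 1))) - xs))\<^sup>2) \<partial>sample_space)"
    by (intro integral_eq_nn_integral) (auto simp: square_integrable_def)
  also have "\<dots> \<le> (\<integral>\<omega>. R \<omega> \<partial>sample_space) + \<gamma>\<^sup>2 * real \<beta> * \<sigma>\<^sup>2 / real CARD('n)"
  proof (rule enn2real_leI)
    have "(\<integral>\<^sup>+\<omega>. ennreal ((norm (node_avg (xit Wb \<gamma> \<beta> g x0 \<omega> (\<beta> * (k + 1))) - xs))\<^sup>2) \<partial>sample_space)
        \<le> (\<integral>\<^sup>+\<omega>. ennreal (R \<omega>) \<partial>sample_space) + ennreal (\<gamma>\<^sup>2 * real \<beta> * \<sigma>\<^sup>2 / real CARD('n))"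
      using nn_integral_next_round_le[OF assms(5,6), of \<gamma> x0 k xs] det
      unfolding x_def a_def by (meson order_trans add_right_mono nn_integral_mono ennreal_leI)
    also have "\<dots> = ennreal ((\<integral>\<omega>. R \<omega> \<partial>sample_space) + \<gamma>\<^sup>2 * real \<beta> * \<sigma>\<^sup>2 / real CARD('n))"
      using R_int \<open>\<And>\<omega>. R \<omega> \<ge> 0\<close> by (simp add: nn_integral_eq_integral integral_nonneg ennreal_plus)
    finally show "(\<integral>\<^sup>+\<omega>. ennreal ((norm (node_avg (xit Wb \<gamma> \<beta> g x0 \<omega> (\<beta> * (k + 1))) - xs))\<^sup>2) \<partial>sample_space)
        \<le> ennreal ((\<integral>\<omega>. R \<omega> \<partial>sample_space) + \<gamma>\<^sup>2 * real \<beta> * \<sigma>\<^sup>2 / real CARD('n))" .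
  qed (use \<open>\<And>\<omega>. R \<omega> \<ge> 0\<close> in \<open>simp add: integral_nonneg\<close>)
  finally show ?thesis
    unfolding R_eq by (simp add: a_def algebra_simps)
qed

end

theorem lemma2:
  fixes f :: "'n::finite \<Rightarrow> 'a::euclidean_space \<Rightarrow> real"
    and df :: "'n \<Rightarrow> 'a \<Rightarrow> 'a"
    and g :: "'n \<Rightarrow> 'a \<Rightarrow> 's \<Rightarrow> 'a"
    and D :: "'n \<Rightarrow> 's measure"
    and W :: "real^'n^'n"
    and acc :: bool
    and \<alpha> \<beta> :: nat
    and \<gamma> \<mu> L \<sigma> :: real
    and x0 :: "'n \<Rightarrow> 'a"
    and xstar :: 'a
  defines "Favg \<equiv> (\<lambda>x. (1 / real CARD('n)) * (\<Sum>i\<in>UNIV. f i x))"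
    and "\<Omega> \<equiv> Pi\<^sub>M UNIV (\<lambda>(i::'n, t::nat). D i)"
    and "X \<equiv> (\<lambda>t \<omega>. xit (Wbar acc W \<alpha>) \<gamma> \<beta> g x0 \<omega> t)"
  assumes grad: "\<And>i x. (f i has_derivative (\<lambda>h. df i x \<bullet> h)) (at x)"
    and strong_conv: "\<mu> \<ge> 0"
      "\<And>i x x'. f i x' - f i x \<ge> df i x \<bullet> (x' - x) + \<mu> / 2 * (norm (x' - x))\<^sup>2"
    and smooth: "\<And>i x y. norm (df i x - df i y) \<le> L * norm (x - y)"
    and prob: "\<And>i. prob_space (D i)"
    and meas: "\<And>i. (\<lambda>(x, s). g i x s) \<in> borel_measurable (borel \<Otimes>\<^sub>M D i)"
    and unbiased: "\<And>i x. integrable (D i) (g i x) \<and> (\<integral>s. g i x s \<partial>D i) = df i x"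
    and variance: "\<And>i x. (\<integral>\<^sup>+s. ennreal ((norm (g i x s - df i x))\<^sup>2) \<partial>D i) \<le> ennreal (\<sigma>\<^sup>2)"
    and graph: "doubly_stochastic W" "rhoW W < 1"
    and minimizer: "\<And>x. Favg xstar \<le> Favg x"
    and params: "\<alpha> \<ge> 1" "\<beta> \<ge> 1" "\<gamma> > 0" "\<gamma> \<le> 1 / (4 * real \<beta> * L)"
  shows "\<forall>k. (\<integral>\<omega>. (norm (node_avg (X (\<beta> * (k + 1)) \<omega>) - xstar))\<^sup>2 \<partial>\<Omega>)
     \<le> (1 - \<mu> * real \<beta> * \<gamma> / 2) * (\<integral>\<omega>. (norm (node_avg (X (\<beta> * k) \<omega>) - xstar))\<^sup>2 \<partial>\<Omega>)
       + \<gamma>\<^sup>2 * real \<beta> * \<sigma>\<^sup>2 / real CARD('n)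
       + 3 * \<gamma> * real \<beta> * L / real CARD('n) * (\<integral>\<omega>. consensus_err (X (\<beta> * k) \<omega>) \<partial>\<Omega>)
       - \<gamma> * real \<beta> * (\<integral>\<omega>. Favg (node_avg (X (\<beta> * k) \<omega>)) - Favg xstar \<partial>\<Omega>)"
proof -
  \<comment> \<open>The step size bound
    forces L > 0, since 1 / 0 = 0.\<close>
  have "0 < 1 / (4 * real \<beta> * L)"
    using params(3,4) by linarith
  then have "4 * real \<beta> * L > 0"
    by simp
  then have "L > 0"
    using params(2) by (simp add: zero_less_mult_iff)
  have "\<gamma> * real \<beta> * L \<le> 1 / 4"
    using params(4) \<open>4 * real \<beta> * L > 0\<close> by (simp add: field_simps)
  moreover have Favg: "Favg = (\<lambda>x. node_avg (\<lambda>i. f i x))"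
    by (simp add: Favg_def node_avg_def fun_eq_iff)
  ultimately show ?thesis
    using expected_round_bound[OF prob meas unbiased variance smooth grad strong_conv(2,1)
        minimizer[unfolded Favg] col_sums_one_Wbar[OF graph(1)] params(2,3) \<open>L > 0\<close>]
    by (simp add: X_def \<Omega>_def Favg)
qed

end
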